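(* Let a partial coloring of an $n\times n$ square with colors from $\{1,\dots,2n-2\}$ uniquely extend to $L(n,2n-2)$, and let $a,b,c$ be colors. Then there are no indices $k,l$ such that either (i) $(k+1,l+1)$, $(k+1,l+2)$, $(k+2,l+2)$, $(k+2,l+3)$ are all uncolored and $a(k+1,l+1)=\{a\}$, $a(k+1,l+2)=\{a,b\}$, $a(k+2,l+2)=\{b,c\}$; or (ii) $(k+3,l+2)$, $(k+2,l+2)$, $(k+2,l+1)$, $(k+1,l+1)$ are all uncolored and $a(k+3,l+2)=\{a\}$, $a(k+2,l+2)=\{a,b\}$, $a(k+2,l+1)=\{b,c\}$.
   Context: For positive integers $n,k$, let $\mathcal{L}_{n,k}$ be the set of $n\times n$ squares all of whose entries are colored with colors from a fixed set of $k$ colors $\{1,\dots,k\}$ such that any two entries in the same row, or in the same column, have different colors. Entries are indexed $(i,j)$, $i$ the row and $j$ the column. A partial coloring of an $n\times n$ square assigns colors from $\{1,\dots,k\}$ to some of its entries; the remaining entries are called uncolored. A partial coloring extends to $L(n,k)$ if the uncolored entries can be colored so that the resulting fully colored square lies in $\mathcal{L}_{n,k}$ (keeping the given colors), and it uniquely extends to $L(n,k)$ if there is exactly one such way. For an uncolored entry $(i,j)$ in a partial coloring with $k$ colors, $a(i,j)$ (the set of available colors) is the set of colors in $\{1,\dots,k\}$ that are not the color of any colored entry in row $i$ or column $j$. *)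

theory Defs
  imports Main
begin

text \<open>A partial coloring is a map P :: nat \<Rightarrow> nat \<Rightarrow> nat option; P i j = None
  means entry (i,j) is uncolored.  A full coloring is F :: nat \<Rightarrow> nat \<Rightarrow> nat
  (values outside the square are irrelevant).\<close>

definition entry :: "nat \<Rightarrow> nat \<Rightarrow> nat \<Rightarrow> bool" where
  "entry n i j \<longleftrightarrow> 1 \<le> i \<and> i \<le> n \<and> 1 \<le> j \<and> j \<le> n"

definition partial_coloring :: "nat \<Rightarrow> nat \<Rightarrow> (nat \<Rightarrow> nat \<Rightarrow> nat option) \<Rightarrow> bool" where
  "partial_coloring n k P \<longleftrightarrow>
     (\<forall>i j c. P i j = Some c \<longrightarrow> entry n i j \<and> c \<in> {1..k})"

definition in_L :: "nat \<Rightarrow> nat \<Rightarrow> (nat \<Rightarrow> nat \<Rightarrow> nat) \<Rightarrow> bool" where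
  "in_L n k F \<longleftrightarrow>
     (\<forall>i j. entry n i j \<longrightarrow> F i j \<in> {1..k}) \<and>
     (\<forall>i j j'. entry n i j \<and> entry n i j' \<and> j \<noteq> j' \<longrightarrow> F i j \<noteq> F i j') \<and>
     (\<forall>i i' j. entry n i j \<and> entry n i' j \<and> i \<noteq> i' \<longrightarrow> F i j \<noteq> F i' j)"

definition is_extension :: "nat \<Rightarrow> nat \<Rightarrow> (nat \<Rightarrow> nat \<Rightarrow> nat option) \<Rightarrow> (nat \<Rightarrow> nat \<Rightarrow> nat) \<Rightarrow> bool" where
  "is_extension n k P F \<longleftrightarrow> in_L n k F \<and> (\<forall>i j c. P i j = Some c \<longrightarrow> F i j = c)"

text \<open>Exactly one extension (two extensions are identified iff they agree on the square).\<close>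
definition uniquely_extends :: "nat \<Rightarrow> nat \<Rightarrow> (nat \<Rightarrow> nat \<Rightarrow> nat option) \<Rightarrow> bool" where
  "uniquely_extends n k P \<longleftrightarrow>
     (\<exists>F. is_extension n k P F \<and>
          (\<forall>G. is_extension n k P G \<longrightarrow> (\<forall>i j. entry n i j \<longrightarrow> G i j = F i j)))"

definition avail :: "nat \<Rightarrow> nat \<Rightarrow> (nat \<Rightarrow> nat \<Rightarrow> nat option) \<Rightarrow> nat \<Rightarrow> nat \<Rightarrow> nat set" where
  "avail n k P i j = {c \<in> {1..k}.
      \<not> (\<exists>j'. entry n i j' \<and> P i j' = Some c) \<and> \<not> (\<exists>i'. entry n i' j \<and> P i' j = Some c)}"

definition uncolored :: "nat \<Rightarrow> (nat \<Rightarrow> nat \<Rightarrow> nat option) \<Rightarrow> nat \<Rightarrow> nat \<Rightarrow> bool" where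
  "uncolored n P i j \<longleftrightarrow> entry n i j \<and> P i j = None"

end

theory Submission
  imports Defs
begin

text \<open>Write the cells as \<open>(r\<^sub>1,c\<^sub>1), (r\<^sub>1,c\<^sub>2), (r\<^sub>2,c\<^sub>2), (r\<^sub>2,c\<^sub>3)\<close>. A cell whose row and column
  carry \<open>p\<close> and \<open>q\<close> colors has at least \<open>2n - 2 - p - q\<close> available colors, so the
  sizes \<open>|a(r\<^sub>2,c\<^sub>2)| = 2\<close> and \<open>|a(r\<^sub>1,c\<^sub>1)| = 1\<close> are only possible if row \<open>r\<^sub>2\<close> is colored
  outside \<open>c\<^sub>2, c\<^sub>3\<close>, in particular \<open>(r\<^sub>2,c\<^sub>1)\<close> has some color \<open>d\<close>, and if in both cases the
  colors of the row and of the column are disjoint. Then \<open>d\<close> is neither in row \<open>r\<^sub>1\<close> nor in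
  column \<open>c\<^sub>2\<close>, so \<open>d \<in> a(r\<^sub>1,c\<^sub>2) = {a,b}\<close>; but \<open>d \<noteq> a\<close> as \<open>a\<close> is available in column \<open>c\<^sub>1\<close>,
  and \<open>d \<noteq> b\<close> as \<open>b\<close> is available in row \<open>r\<^sub>2\<close>. Case (ii) is case (i) transposed.\<close>

definition row_colors :: "nat \<Rightarrow> (nat \<Rightarrow> nat \<Rightarrow> nat option) \<Rightarrow> nat \<Rightarrow> nat set" where
  "row_colors n P i = {c. \<exists>j. entry n i j \<and> P i j = Some c}"

definition col_colors :: "nat \<Rightarrow> (nat \<Rightarrow> nat \<Rightarrow> nat option) \<Rightarrow> nat \<Rightarrow> nat set" where
  "col_colors n P j = {c. \<exists>i. entry n i j \<and> P i j = Some c}"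

definition transpose :: "(nat \<Rightarrow> nat \<Rightarrow> nat option) \<Rightarrow> nat \<Rightarrow> nat \<Rightarrow> nat option" where
  "transpose P i j = P j i"

lemma avail_eq: "avail n k P i j = {1..k} - (row_colors n P i \<union> col_colors n P j)"
  unfolding avail_def row_colors_def col_colors_def by blast

lemma col_colors_eq_row_colors_transpose: "col_colors n P j = row_colors n (transpose P) j"
  unfolding col_colors_def row_colors_def transpose_def entry_def by blast

lemma avail_transpose: "avail n k (transpose P) i j = avail n k P j i"
  unfolding avail_def transpose_def entry_def by blast

lemma uncolored_transpose: "uncolored n (transpose P) i j = uncolored n P j i"
  unfolding uncolored_def transpose_def entry_def by auto

lemma partial_coloring_transpose: "partial_coloring n k (transpose P) = partial_coloring n k P"
  unfolding partial_coloring_def transpose_def entry_def by auto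

lemma row_colors_subset: "partial_coloring n k P \<Longrightarrow> row_colors n P i \<subseteq> {1..k}"
  unfolding partial_coloring_def row_colors_def by blast

lemma col_colors_subset: "partial_coloring n k P \<Longrightarrow> col_colors n P j \<subseteq> {1..k}"
  unfolding partial_coloring_def col_colors_def by blast

lemma row_colors_subset_image: "row_colors n P i \<subseteq> (\<lambda>j. the (P i j)) ` {j \<in> {1..n}. P i j \<noteq> None}"
  unfolding row_colors_def entry_def by force

lemma finite_row_colors: "finite (row_colors n P i)"
  using row_colors_subset_image by (rule finite_subset) simp

lemma finite_col_colors: "finite (col_colors n P j)"
  by (simp add: col_colors_eq_row_colors_transpose finite_row_colors)

lemma card_row_colors_le:
  assumes "U \<subseteq> {1..n}" and "\<forall>j\<in>U. P i j = None"
  shows "card (row_colors n P i) \<le> n - card U"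
proof -
  have "card (row_colors n P i) \<le> card {j \<in> {1..n}. P i j \<noteq> None}"
    using row_colors_subset_image by (rule surj_card_le [rotated]) simp
  also have "\<dots> \<le> card ({1..n} - U)"
    using assms(2) by (intro card_mono) auto
  also have "\<dots> = n - card U"
    using assms(1) by (simp add: card_Diff_subset finite_subset)
  finally show ?thesis .
qed

lemma card_col_colors_le:
  assumes "U \<subseteq> {1..n}" and "\<forall>i\<in>U. P i j = None"
  shows "card (col_colors n P j) \<le> n - card U"
  unfolding col_colors_eq_row_colors_transpose
  using assms by (intro card_row_colors_le) (auto simp: transpose_def)

lemma card_avail_ge:
  "k - card (row_colors n P i) - card (col_colors n P j) \<le> card (avail n k P i j)"
proof -
  have "k - card (row_colors n P i \<union> col_colors n P j) \<le> card (avail n k P i j)"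
    unfolding avail_eq using diff_card_le_card_Diff[of _ "{1..k}"]
    by (simp add: finite_row_colors finite_col_colors)
  moreover have "card (row_colors n P i \<union> col_colors n P j)
      \<le> card (row_colors n P i) + card (col_colors n P j)"
    by (rule card_Un_le)
  ultimately show ?thesis by linarith
qed

lemma row_col_colors_disjoint_if_tight:
  assumes "partial_coloring n k P"
    and "card (row_colors n P i) + card (col_colors n P j) + card (avail n k P i j) \<le> k"
  shows "row_colors n P i \<inter> col_colors n P j = {}"
proof -
  let ?R = "row_colors n P i" and ?C = "col_colors n P j"
  have fin: "finite ?R" "finite ?C"
    by (simp_all add: finite_row_colors finite_col_colors)
  have "{1..k} = avail n k P i j \<union> (?R \<union> ?C)"
    using row_colors_subset[OF assms(1)] col_colors_subset[OF assms(1)] by (auto simp: avail_eq)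
  then have "k \<le> card (avail n k P i j) + card (?R \<union> ?C)"
    by (metis card_Un_le card_atLeastAtMost diff_Suc_1)
  moreover have "card (?R \<union> ?C) + card (?R \<inter> ?C) = card ?R + card ?C"
    using fin by (rule card_Un_Int [symmetric])
  ultimately have "card (?R \<inter> ?C) = 0"
    using assms(2) by linarith
  then show ?thesis
    using fin by simp
qed

lemma avail_staircase_impossible:
  assumes pc: "partial_coloring n (2*n-2) P"
    and u11: "uncolored n P r\<^sub>1 c\<^sub>1" and u12: "uncolored n P r\<^sub>1 c\<^sub>2"
    and u22: "uncolored n P r\<^sub>2 c\<^sub>2" and u23: "uncolored n P r\<^sub>2 c\<^sub>3"
    and distinct: "r\<^sub>1 \<noteq> r\<^sub>2" "c\<^sub>1 \<noteq> c\<^sub>2" "c\<^sub>2 \<noteq> c\<^sub>3" "c\<^sub>1 \<noteq> c\<^sub>3"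
    and a11: "avail n (2*n-2) P r\<^sub>1 c\<^sub>1 = {a}"
    and a12: "avail n (2*n-2) P r\<^sub>1 c\<^sub>2 = {a, b}"
    and a22: "avail n (2*n-2) P r\<^sub>2 c\<^sub>2 = {b, c}"
  shows False
proof -
  have cells: "{r\<^sub>1, r\<^sub>2} \<subseteq> {1..n}" "{c\<^sub>1, c\<^sub>2, c\<^sub>3} \<subseteq> {1..n}"
    using u11 u22 u23 by (auto simp: uncolored_def entry_def)
  then have "n \<ge> 3"
    using distinct card_mono[of "{1..n}" "{c\<^sub>1, c\<^sub>2, c\<^sub>3}"] by simp
  have none: "P r\<^sub>1 c\<^sub>1 = None" "P r\<^sub>1 c\<^sub>2 = None" "P r\<^sub>2 c\<^sub>2 = None" "P r\<^sub>2 c\<^sub>3 = None"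
    using u11 u12 u22 u23 by (simp_all add: uncolored_def)
  have card_row2: "card (row_colors n P r\<^sub>2) \<le> n - 2"
    using card_row_colors_le[of "{c\<^sub>2, c\<^sub>3}" n P r\<^sub>2] cells none distinct by simp
  have card_col2: "card (col_colors n P c\<^sub>2) \<le> n - 2"
    using card_col_colors_le[of "{r\<^sub>1, r\<^sub>2}" n P c\<^sub>2] cells none distinct by simp
  have card_row1: "card (row_colors n P r\<^sub>1) \<le> n - 2"
    using card_row_colors_le[of "{c\<^sub>1, c\<^sub>2}" n P r\<^sub>1] cells none distinct by simp
  have card_col1: "card (col_colors n P c\<^sub>1) \<le> n - 1"
    using card_col_colors_le[of "{r\<^sub>1}" n P c\<^sub>1] cells none by simp
  have card_a22: "card (avail n (2*n-2) P r\<^sub>2 c\<^sub>2) \<le> 2"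
    unfolding a22 by (simp add: card_insert_le_m1)
  obtain d where d: "P r\<^sub>2 c\<^sub>1 = Some d"
  proof (cases "P r\<^sub>2 c\<^sub>1")
    case None
    then have "card (row_colors n P r\<^sub>2) \<le> n - 3"
      using card_row_colors_le[of "{c\<^sub>1, c\<^sub>2, c\<^sub>3}" n P r\<^sub>2] cells none distinct by simp
    then show ?thesis
      using card_avail_ge[of "2*n-2" n P r\<^sub>2 c\<^sub>2] card_col2 card_a22 \<open>n \<ge> 3\<close> by linarith
  qed
  have d_row2: "d \<in> row_colors n P r\<^sub>2" and d_col1: "d \<in> col_colors n P c\<^sub>1"
    using d cells by (auto simp: row_colors_def col_colors_def entry_def)
  have "row_colors n P r\<^sub>2 \<inter> col_colors n P c\<^sub>2 = {}"
    using card_row2 card_col2 card_a22 \<open>n \<ge> 3\<close>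
    by (intro row_col_colors_disjoint_if_tight[OF pc]) linarith
  moreover have "row_colors n P r\<^sub>1 \<inter> col_colors n P c\<^sub>1 = {}"
    using card_row1 card_col1 a11 \<open>n \<ge> 3\<close>
    by (intro row_col_colors_disjoint_if_tight[OF pc]) simp
  moreover have "d \<in> {1..2*n-2}"
    using d_row2 row_colors_subset[OF pc] by blast
  ultimately have "d \<in> avail n (2*n-2) P r\<^sub>1 c\<^sub>2"
    using d_row2 d_col1 by (auto simp: avail_eq)
  moreover have "a \<notin> col_colors n P c\<^sub>1"
    using a11 by (auto simp: avail_eq)
  moreover have "b \<notin> row_colors n P r\<^sub>2"
    using a22 by (auto simp: avail_eq)
  ultimately show False
    using a12 d_row2 d_col1 by auto
qed

theorem lemma3:
  fixes n :: nat and P :: "nat \<Rightarrow> nat \<Rightarrow> nat option" and a b c k l :: nat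
  assumes "partial_coloring n (2*n-2) P"
    and "uniquely_extends n (2*n-2) P"
    and "a \<in> {1..2*n-2}" "b \<in> {1..2*n-2}" "c \<in> {1..2*n-2}"
  shows "\<not> ((uncolored n P (k+1) (l+1) \<and> uncolored n P (k+1) (l+2) \<and>
             uncolored n P (k+2) (l+2) \<and> uncolored n P (k+2) (l+3) \<and>
             avail n (2*n-2) P (k+1) (l+1) = {a} \<and>
             avail n (2*n-2) P (k+1) (l+2) = {a, b} \<and>
             avail n (2*n-2) P (k+2) (l+2) = {b, c})
          \<or> (uncolored n P (k+3) (l+2) \<and> uncolored n P (k+2) (l+2) \<and>
             uncolored n P (k+2) (l+1) \<and> uncolored n P (k+1) (l+1) \<and>
             avail n (2*n-2) P (k+3) (l+2) = {a} \<and>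
             avail n (2*n-2) P (k+2) (l+2) = {a, b} \<and>
             avail n (2*n-2) P (k+2) (l+1) = {b, c}))"
  using avail_staircase_impossible[OF assms(1), of "k+1" "l+1" "l+2" "k+2" "l+3" a b c]
    avail_staircase_impossible[of n "transpose P" "l+2" "k+3" "k+2" "l+1" "k+1" a b c]
    assms(1)
  by (auto simp: partial_coloring_transpose uncolored_transpose avail_transpose)

end
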